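(* Let $\bar\alpha$ be an affine infra-nilmanifold endomorphism of $\Gamma\backslash G$ induced by $\alpha\in\mathrm{Aff}(G)$, let $N=\Gamma\cap G$ be the Fitting subgroup of $\Gamma$, and let $p:N\backslash G\to\Gamma\backslash G$, $Nx\mapsto\Gamma x$, be the natural covering map. Then $\alpha N\alpha^{-1}\subseteq N$, so $\alpha$ induces an affine nilmanifold endomorphism $\tilde\alpha(Nx)=N\,{}^{\alpha}x$ of $N\backslash G$, which is a lift of $\bar\alpha$ (i.e. $p\circ\tilde\alpha=\bar\alpha\circ p$), and $$p^{-1}(\mathrm{ePer}(\bar\alpha))=\mathrm{ePer}(\tilde\alpha),\qquad p^{-1}(\mathrm{Per}(\bar\alpha))=\mathrm{Per}(\tilde\alpha).$$
   Context: $G$ is a connected, simply connected nilpotent Lie group, $\mathrm{Aff}(G)=G\rtimes\mathrm{Aut}(G)$ acting by ${}^{(g,\delta)}x=g\delta(x)$, with $G$ identified with pure translations. $\Gamma\le G\rtimes F$ ($F\le \mathrm{Aut}(G)$ finite) is a torsion-free discrete subgroup with $\Gamma\backslash G$ compact, and $\bar\alpha(\Gamma x)=\Gamma\,{}^\alpha x$ where $\alpha\Gamma\alpha^{-1}\subseteq\Gamma$. For a self-map $f$: $\mathrm{Per}(f)=\{x:\exists k>0, f^k(x)=x\}$, $\mathrm{ePer}(f)=\{x:\exists k>0, f^k(x)\in\mathrm{Per}(f)\}$. *)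

theory Defs
  imports "HOL-Analysis.Analysis" "HOL-Algebra.Algebra"
begin

primrec lower_central :: "('a, 'b) monoid_scheme \<Rightarrow> nat \<Rightarrow> 'a set" where
  "lower_central G 0 = carrier G"
| "lower_central G (Suc n) =
     generate G {a \<otimes>\<^bsub>G\<^esub> b \<otimes>\<^bsub>G\<^esub> inv\<^bsub>G\<^esub> a \<otimes>\<^bsub>G\<^esub> inv\<^bsub>G\<^esub> b
                 | a b. a \<in> carrier G \<and> b \<in> lower_central G n}"

definition nilpotent_group :: "('a, 'b) monoid_scheme \<Rightarrow> bool" where
  "nilpotent_group G \<longleftrightarrow> group G \<and> (\<exists>n. lower_central G n = {\<one>\<^bsub>G\<^esub>})"

text \<open>G is a group whose carrier is the whole Euclidean space 'a, with continuous
operations; Aut(G) are the group automorphisms that are homeomorphisms.\<close>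

definition cont_aut :: "('a::topological_space) monoid \<Rightarrow> ('a \<Rightarrow> 'a) set" where
  "cont_aut G = {\<delta>. \<delta> \<in> iso G G \<and> (\<exists>\<delta>'. homeomorphism UNIV UNIV \<delta> \<delta>')}"

definition Aff :: "('a::topological_space) monoid \<Rightarrow> ('a \<times> ('a \<Rightarrow> 'a)) monoid" where
  "Aff G = \<lparr> carrier = carrier G \<times> cont_aut G,
             mult = (\<lambda>(g, \<delta>) (h, \<epsilon>). (g \<otimes>\<^bsub>G\<^esub> \<delta> h, \<delta> \<circ> \<epsilon>)),
             one = (\<one>\<^bsub>G\<^esub>, id) \<rparr>"

definition aff_act :: "'a monoid \<Rightarrow> 'a \<times> ('a \<Rightarrow> 'a) \<Rightarrow> 'a \<Rightarrow> 'a" where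
  "aff_act G \<gamma> x = fst \<gamma> \<otimes>\<^bsub>G\<^esub> snd \<gamma> x"

text \<open>G identified with pure translations; N = Gamma \<inter> G.\<close>

definition transl_part :: "('a \<times> ('a \<Rightarrow> 'a)) set \<Rightarrow> ('a \<times> ('a \<Rightarrow> 'a)) set" where
  "transl_part \<Gamma> = {\<gamma> \<in> \<Gamma>. snd \<gamma> = id}"

text \<open>The point H x of the orbit space H\G, represented as the orbit (a set).\<close>

definition orbit :: "'a monoid \<Rightarrow> ('a \<times> ('a \<Rightarrow> 'a)) set \<Rightarrow> 'a \<Rightarrow> 'a set" where
  "orbit G H x = (\<lambda>h. aff_act G h x) ` H"

definition orbit_space :: "'a monoid \<Rightarrow> ('a \<times> ('a \<Rightarrow> 'a)) set \<Rightarrow> 'a set set" where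
  "orbit_space G H = range (orbit G H)"

text \<open>Map on H\G induced by alpha: it sends H x to H (alpha x) (choice free
formulation: image of the orbit under alpha, saturated by H).\<close>

definition induced_map ::
  "'a monoid \<Rightarrow> ('a \<times> ('a \<Rightarrow> 'a)) set \<Rightarrow> 'a \<times> ('a \<Rightarrow> 'a) \<Rightarrow> 'a set \<Rightarrow> 'a set" where
  "induced_map G H \<alpha> S = {aff_act G h (aff_act G \<alpha> y) | h y. h \<in> H \<and> y \<in> S}"

definition proj_map ::
  "'a monoid \<Rightarrow> ('a \<times> ('a \<Rightarrow> 'a)) set \<Rightarrow> 'a set \<Rightarrow> 'a set" where
  "proj_map G \<Gamma> S = {aff_act G \<gamma> y | \<gamma> y. \<gamma> \<in> \<Gamma> \<and> y \<in> S}"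

definition Per_on :: "'b set \<Rightarrow> ('b \<Rightarrow> 'b) \<Rightarrow> 'b set" where
  "Per_on A f = {x \<in> A. \<exists>k>0. (f ^^ k) x = x}"

definition ePer_on :: "'b set \<Rightarrow> ('b \<Rightarrow> 'b) \<Rightarrow> 'b set" where
  "ePer_on A f = {x \<in> A. \<exists>k>0. (f ^^ k) x \<in> Per_on A f}"

end

theory Submission imports Defs begin

text \<open>Suppose \<open>\<Gamma> x\<close> is periodic, i.e. \<open>\<alpha>\<^sup>k x = \<gamma>\<^sub>0 x\<close> with \<open>k > 0\<close> and
  \<open>\<gamma>\<^sub>0 \<in> \<Gamma>\<close>. Put \<open>\<beta> = \<alpha>\<^sup>k\<close> and \<open>d = \<beta>\<^sup>-\<^sup>1 \<gamma>\<^sub>0\<close>, which fixes \<open>x\<close>.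
  Since \<open>\<beta>\<close> normalises \<open>\<Gamma>\<close>, all \<open>g\<^sub>j = \<beta>\<^sup>j d\<^sup>j\<close> lie in \<open>\<Gamma>\<close>, and \<open>g\<^sub>j x = \<beta>\<^sup>j x\<close>.
  Their linear parts lie in the finite holonomy group \<open>F\<close>, so two of them agree, for
  some \<open>i < j\<close>; as \<open>g\<^sub>j = \<beta>\<^sup>i g\<^sub>m d\<^sup>i\<close> and \<open>g\<^sub>i = \<beta>\<^sup>i d\<^sup>i\<close> with \<open>m = j - i\<close>, the
  element \<open>g\<^sub>m\<close> is a pure translation, i.e. lies in \<open>N\<close>, and \<open>\<alpha>\<^sup>k\<^sup>m x = g\<^sub>m x\<close>
  makes \<open>N x\<close> periodic. The converse holds because the projection semiconjugates the
  two induced maps, and eventual periodicity is periodicity of some iterate.\<close>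

lemma cont_aut_hom:
  assumes "\<delta> \<in> cont_aut G" "x \<in> carrier G" "y \<in> carrier G"
  shows "\<delta> (x \<otimes>\<^bsub>G\<^esub> y) = \<delta> x \<otimes>\<^bsub>G\<^esub> \<delta> y"
  using assms by (auto simp: cont_aut_def iso_def hom_def)

lemma cont_aut_comp:
  assumes "\<delta> \<in> cont_aut G" "\<epsilon> \<in> cont_aut G"
  shows "\<delta> \<circ> \<epsilon> \<in> cont_aut G"
proof -
  obtain \<delta>' \<epsilon>' where "homeomorphism UNIV UNIV \<delta> \<delta>'" "homeomorphism UNIV UNIV \<epsilon> \<epsilon>'"
    using assms by (auto simp: cont_aut_def)
  then have "homeomorphism UNIV UNIV (\<delta> \<circ> \<epsilon>) (\<epsilon>' \<circ> \<delta>')"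
    by (rule homeomorphism_compose[rotated])
  moreover have "\<delta> \<circ> \<epsilon> \<in> iso G G"
    using assms iso_set_trans[of \<epsilon> G G \<delta> G] by (auto simp: cont_aut_def)
  ultimately show ?thesis by (auto simp: cont_aut_def)
qed

lemma snd_Aff_mult [simp]: "snd (p \<otimes>\<^bsub>Aff G\<^esub> q) = snd p \<circ> snd q"
  by (cases p; cases q) (simp add: Aff_def)

lemma snd_Aff_one [simp]: "snd \<one>\<^bsub>Aff G\<^esub> = id"
  by (simp add: Aff_def)

lemma induced_map_eq_UN: "induced_map G H \<alpha> S = (\<Union>y\<in>S. orbit G H (aff_act G \<alpha> y))"
  by (auto simp: induced_map_def orbit_def)

lemma proj_map_eq_UN: "proj_map G \<Gamma> S = (\<Union>y\<in>S. orbit G \<Gamma> y)"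
  by (auto simp: proj_map_def orbit_def)

lemma transl_part_subset: "transl_part \<Gamma> \<subseteq> \<Gamma>"
  by (auto simp: transl_part_def)

locale aff_group = group G for G :: "'a::topological_space monoid" +
  assumes carrier_UNIV: "carrier G = UNIV"
begin

lemma id_cont_aut: "id \<in> cont_aut G"
proof -
  have "id \<in> iso G G" by (simp add: iso_def hom_def bij_betw_def)
  moreover have "homeomorphism UNIV UNIV id id" by (simp add: homeomorphism_def)
  ultimately show ?thesis by (auto simp: cont_aut_def)
qed

lemma cont_aut_left_inverse:
  assumes "\<delta> \<in> cont_aut G"
  shows "\<exists>\<epsilon>\<in>cont_aut G. \<epsilon> \<circ> \<delta> = id"
proof -
  obtain \<delta>' where homeo: "homeomorphism UNIV UNIV \<delta> \<delta>'"
    using assms by (auto simp: cont_aut_def)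
  have "inv_into (carrier G) \<delta> \<in> iso G G"
    using assms iso_set_sym by (auto simp: cont_aut_def)
  moreover have "\<delta>' x = inv_into (carrier G) \<delta> x" for x
    using homeo carrier_UNIV
    by (metis UNIV_I homeomorphism_apply1 homeomorphism_apply2 injI inv_into_f_eq)
  ultimately have "\<delta>' \<in> iso G G"
    using iso_eq by blast
  with homeo have "\<delta>' \<in> cont_aut G"
    unfolding cont_aut_def by (metis (mono_tags) homeomorphism_sym mem_Collect_eq)
  moreover have "\<delta>' \<circ> \<delta> = id"
    using homeo by (auto simp: fun_eq_iff homeomorphism_def)
  ultimately show ?thesis by blast
qed

sublocale Aff: group "Aff G"
proof (rule groupI)
  show "\<one>\<^bsub>Aff G\<^esub> \<in> carrier (Aff G)"
    using id_cont_aut by (simp add: Aff_def carrier_UNIV)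
  fix x y z assume x: "x \<in> carrier (Aff G)"
  show "\<exists>y\<in>carrier (Aff G). y \<otimes>\<^bsub>Aff G\<^esub> x = \<one>\<^bsub>Aff G\<^esub>"
  proof -
    obtain g \<delta> where x_eq: "x = (g, \<delta>)" and \<delta>: "\<delta> \<in> cont_aut G"
      using x by (auto simp: Aff_def)
    obtain \<epsilon> where \<epsilon>: "\<epsilon> \<in> cont_aut G" "\<epsilon> \<circ> \<delta> = id"
      using cont_aut_left_inverse[OF \<delta>] by blast
    have "(inv\<^bsub>G\<^esub> (\<epsilon> g), \<epsilon>) \<otimes>\<^bsub>Aff G\<^esub> x = \<one>\<^bsub>Aff G\<^esub>"
      using x_eq \<epsilon> carrier_UNIV by (simp add: Aff_def)
    moreover have "(inv\<^bsub>G\<^esub> (\<epsilon> g), \<epsilon>) \<in> carrier (Aff G)"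
      using \<epsilon> carrier_UNIV by (simp add: Aff_def)
    ultimately show ?thesis by blast
  qed
  assume y: "y \<in> carrier (Aff G)" and z: "z \<in> carrier (Aff G)"
  show "x \<otimes>\<^bsub>Aff G\<^esub> y \<in> carrier (Aff G)"
    using x y carrier_UNIV cont_aut_comp by (auto simp: Aff_def split: prod.splits)
  show "x \<otimes>\<^bsub>Aff G\<^esub> y \<otimes>\<^bsub>Aff G\<^esub> z = x \<otimes>\<^bsub>Aff G\<^esub> (y \<otimes>\<^bsub>Aff G\<^esub> z)"
    using x y z carrier_UNIV by (auto simp: Aff_def cont_aut_hom m_assoc split: prod.splits)
  show "\<one>\<^bsub>Aff G\<^esub> \<otimes>\<^bsub>Aff G\<^esub> x = x"
    using x carrier_UNIV by (auto simp: Aff_def split: prod.splits)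
qed

lemma aff_act_one [simp]: "aff_act G \<one>\<^bsub>Aff G\<^esub> y = y"
  by (simp add: Aff_def aff_act_def carrier_UNIV)

lemma aff_act_mult:
  assumes "p \<in> carrier (Aff G)" "q \<in> carrier (Aff G)"
  shows "aff_act G (p \<otimes>\<^bsub>Aff G\<^esub> q) y = aff_act G p (aff_act G q y)"
  using assms carrier_UNIV
  by (auto simp: Aff_def aff_act_def cont_aut_hom m_assoc split: prod.splits)

lemma aff_act_pow:
  assumes "p \<in> carrier (Aff G)"
  shows "aff_act G (p [^]\<^bsub>Aff G\<^esub> n) = aff_act G p ^^ n"
proof (induction n)
  case (Suc n)
  then show ?case
    using assms by (simp add: Aff.nat_pow_Suc2 aff_act_mult funpow_swap1)
qed (simp add: fun_eq_iff)

lemma snd_Aff_inv: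
  assumes "p \<in> carrier (Aff G)"
  shows "snd (inv\<^bsub>Aff G\<^esub> p) \<circ> snd p = id" "snd p \<circ> snd (inv\<^bsub>Aff G\<^esub> p) = id"
  using snd_Aff_mult[where p = "inv\<^bsub>Aff G\<^esub> p" and q = p and G = G]
    snd_Aff_mult[where p = p and q = "inv\<^bsub>Aff G\<^esub> p" and G = G] assms
  by simp_all

lemma subgroup_transl_part:
  assumes "subgroup \<Gamma> (Aff G)"
  shows "subgroup (transl_part \<Gamma>) (Aff G)"
proof -
  interpret \<Gamma>: subgroup \<Gamma> "Aff G" by fact
  have "snd (inv\<^bsub>Aff G\<^esub> h) = id" if "h \<in> \<Gamma>" "snd h = id" for h
    using snd_Aff_inv(1)[of h] that by simp
  then show ?thesis
    by unfold_locales (auto simp: transl_part_def)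
qed

lemma transl_part_conj_closed:
  assumes "\<alpha> \<in> carrier (Aff G)"
    and "\<forall>\<gamma>\<in>\<Gamma>. \<alpha> \<otimes>\<^bsub>Aff G\<^esub> \<gamma> \<otimes>\<^bsub>Aff G\<^esub> inv\<^bsub>Aff G\<^esub> \<alpha> \<in> \<Gamma>"
  shows "\<forall>\<nu>\<in>transl_part \<Gamma>. \<alpha> \<otimes>\<^bsub>Aff G\<^esub> \<nu> \<otimes>\<^bsub>Aff G\<^esub> inv\<^bsub>Aff G\<^esub> \<alpha> \<in> transl_part \<Gamma>"
  using assms snd_Aff_inv(2)[of \<alpha>] by (auto simp: transl_part_def)

lemma conj_pow_closed:
  assumes "subgroup \<Gamma> (Aff G)" "\<alpha> \<in> carrier (Aff G)"
    and "\<forall>\<gamma>\<in>\<Gamma>. \<alpha> \<otimes>\<^bsub>Aff G\<^esub> \<gamma> \<otimes>\<^bsub>Aff G\<^esub> inv\<^bsub>Aff G\<^esub> \<alpha> \<in> \<Gamma>"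
    and "\<gamma> \<in> \<Gamma>"
  shows "\<alpha> [^]\<^bsub>Aff G\<^esub> (n::nat) \<otimes>\<^bsub>Aff G\<^esub> \<gamma> \<otimes>\<^bsub>Aff G\<^esub> inv\<^bsub>Aff G\<^esub> (\<alpha> [^]\<^bsub>Aff G\<^esub> n) \<in> \<Gamma>"
  using \<open>\<gamma> \<in> \<Gamma>\<close>
proof (induction n arbitrary: \<gamma>)
  case 0
  then show ?case using subgroup.mem_carrier[OF assms(1)] by simp
next
  case (Suc n)
  have "\<gamma> \<in> carrier (Aff G)" using Suc.prems subgroup.mem_carrier[OF assms(1)] by blast
  then have "\<alpha> [^]\<^bsub>Aff G\<^esub> Suc n \<otimes>\<^bsub>Aff G\<^esub> \<gamma> \<otimes>\<^bsub>Aff G\<^esub> inv\<^bsub>Aff G\<^esub> (\<alpha> [^]\<^bsub>Aff G\<^esub> Suc n)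
      = \<alpha> [^]\<^bsub>Aff G\<^esub> n \<otimes>\<^bsub>Aff G\<^esub> (\<alpha> \<otimes>\<^bsub>Aff G\<^esub> \<gamma> \<otimes>\<^bsub>Aff G\<^esub> inv\<^bsub>Aff G\<^esub> \<alpha>)
        \<otimes>\<^bsub>Aff G\<^esub> inv\<^bsub>Aff G\<^esub> (\<alpha> [^]\<^bsub>Aff G\<^esub> n)"
    using assms(2) by (simp add: Aff.inv_mult_group Aff.m_assoc)
  then show ?case using assms(3) Suc by simp
qed

lemma orbit_self_mem:
  assumes "subgroup H (Aff G)"
  shows "x \<in> orbit G H x"
  using subgroup.one_closed[OF assms] aff_act_one unfolding orbit_def by (metis image_eqI)

lemma orbit_aff_act:
  assumes "subgroup H (Aff G)" "h \<in> H"
  shows "orbit G H (aff_act G h v) = orbit G H v"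
proof -
  interpret H: subgroup H "Aff G" by fact
  have H_shift: "(\<lambda>h'. h' \<otimes>\<^bsub>Aff G\<^esub> h) ` H = H"
    using H.rcos_const[OF Aff.is_group assms(2)] by (simp add: r_coset_def UNION_singleton_eq_range)
  have "orbit G H (aff_act G h v) = (\<lambda>h'. aff_act G (h' \<otimes>\<^bsub>Aff G\<^esub> h) v) ` H"
    unfolding orbit_def using assms(2) by (intro image_cong) (auto simp: aff_act_mult)
  also have "\<dots> = (\<lambda>h'. aff_act G h' v) ` (\<lambda>h'. h' \<otimes>\<^bsub>Aff G\<^esub> h) ` H"
    by (simp add: image_image)
  finally show ?thesis
    by (simp add: H_shift orbit_def)
qed

lemma induced_map_orbit:
  assumes H: "subgroup H (Aff G)" and \<alpha>: "\<alpha> \<in> carrier (Aff G)"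
    and normal: "\<forall>h\<in>H. \<alpha> \<otimes>\<^bsub>Aff G\<^esub> h \<otimes>\<^bsub>Aff G\<^esub> inv\<^bsub>Aff G\<^esub> \<alpha> \<in> H"
  shows "induced_map G H \<alpha> (orbit G H x) = orbit G H (aff_act G \<alpha> x)"
proof -
  have "orbit G H (aff_act G \<alpha> y) = orbit G H (aff_act G \<alpha> x)" if y: "y \<in> orbit G H x" for y
  proof -
    obtain h where h: "h \<in> H" "y = aff_act G h x"
      using y unfolding orbit_def by blast
    define c where "c = \<alpha> \<otimes>\<^bsub>Aff G\<^esub> h \<otimes>\<^bsub>Aff G\<^esub> inv\<^bsub>Aff G\<^esub> \<alpha>"
    have "h \<in> carrier (Aff G)" "c \<in> carrier (Aff G)"
      using h(1) H \<alpha> by (auto simp: c_def subgroup.mem_carrier)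
    then have "aff_act G \<alpha> y = aff_act G c (aff_act G \<alpha> x)"
      using h(2) \<alpha> by (simp add: aff_act_mult[symmetric] c_def Aff.m_assoc)
    then show ?thesis
      using orbit_aff_act[OF H] normal h(1) by (simp add: c_def)
  qed
  then have "induced_map G H \<alpha> (orbit G H x) = (\<Union>y\<in>orbit G H x. orbit G H (aff_act G \<alpha> x))"
    unfolding induced_map_eq_UN by (rule SUP_cong[OF refl])
  moreover have "orbit G H x \<noteq> {}"
    using orbit_self_mem[OF H] by blast
  ultimately show ?thesis
    by (simp add: UN_constant)
qed

lemma proj_map_orbit:
  assumes "subgroup \<Gamma> (Aff G)" "N \<subseteq> \<Gamma>" "subgroup N (Aff G)"
  shows "proj_map G \<Gamma> (orbit G N x) = orbit G \<Gamma> x"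
proof -
  have "orbit G \<Gamma> y = orbit G \<Gamma> x" if y: "y \<in> orbit G N x" for y
  proof -
    obtain \<nu> where \<nu>: "\<nu> \<in> N" "y = aff_act G \<nu> x"
      using y unfolding orbit_def by blast
    then have "\<nu> \<in> \<Gamma>"
      using assms(2) by blast
    then show ?thesis
      using orbit_aff_act[OF assms(1)] \<nu>(2) by simp
  qed
  then have "proj_map G \<Gamma> (orbit G N x) = (\<Union>y\<in>orbit G N x. orbit G \<Gamma> x)"
    unfolding proj_map_eq_UN by (rule SUP_cong[OF refl])
  moreover have "orbit G N x \<noteq> {}"
    using orbit_self_mem[OF assms(3)] by blast
  ultimately show ?thesis
    by (simp add: UN_constant)
qed

lemma pow_mult_pow_mem:
  assumes \<Gamma>: "subgroup \<Gamma> (Aff G)" and \<beta>: "\<beta> \<in> carrier (Aff G)" and d: "d \<in> carrier (Aff G)"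
    and normal: "\<forall>\<gamma>\<in>\<Gamma>. \<beta> \<otimes>\<^bsub>Aff G\<^esub> \<gamma> \<otimes>\<^bsub>Aff G\<^esub> inv\<^bsub>Aff G\<^esub> \<beta> \<in> \<Gamma>"
    and \<beta>d: "\<beta> \<otimes>\<^bsub>Aff G\<^esub> d \<in> \<Gamma>"
  shows "\<beta> [^]\<^bsub>Aff G\<^esub> (j::nat) \<otimes>\<^bsub>Aff G\<^esub> d [^]\<^bsub>Aff G\<^esub> j \<in> \<Gamma>"
proof (induction j)
  case 0
  then show ?case using subgroup.one_closed[OF \<Gamma>] by simp
next
  case (Suc j)
  have cancel: "inv\<^bsub>Aff G\<^esub> \<beta> \<otimes>\<^bsub>Aff G\<^esub> (\<beta> \<otimes>\<^bsub>Aff G\<^esub> d) = d"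
    using \<beta> d by (simp add: Aff.m_assoc[symmetric])
  have "\<beta> [^]\<^bsub>Aff G\<^esub> Suc j \<otimes>\<^bsub>Aff G\<^esub> d [^]\<^bsub>Aff G\<^esub> Suc j
      = \<beta> \<otimes>\<^bsub>Aff G\<^esub> \<beta> [^]\<^bsub>Aff G\<^esub> j \<otimes>\<^bsub>Aff G\<^esub> (d [^]\<^bsub>Aff G\<^esub> j \<otimes>\<^bsub>Aff G\<^esub> d)"
    by (simp only: Aff.nat_pow_Suc2[OF \<beta>] Aff.nat_pow_Suc[of d])
  also have "\<dots> = \<beta> \<otimes>\<^bsub>Aff G\<^esub> (\<beta> [^]\<^bsub>Aff G\<^esub> j \<otimes>\<^bsub>Aff G\<^esub> d [^]\<^bsub>Aff G\<^esub> j) \<otimes>\<^bsub>Aff G\<^esub> inv\<^bsub>Aff G\<^esub> \<beta>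
      \<otimes>\<^bsub>Aff G\<^esub> (\<beta> \<otimes>\<^bsub>Aff G\<^esub> d)"
    using \<beta> d by (simp add: Aff.m_assoc cancel)
  finally show ?case
    using Suc normal \<beta>d subgroup.m_closed[OF \<Gamma>] by simp
qed

lemma pow_mult_pow_transl_part:
  assumes \<Gamma>: "subgroup \<Gamma> (Aff G)" and holonomy_finite: "finite (snd ` \<Gamma>)"
    and \<beta>: "\<beta> \<in> carrier (Aff G)" and d: "d \<in> carrier (Aff G)"
    and mem: "\<And>j::nat. \<beta> [^]\<^bsub>Aff G\<^esub> j \<otimes>\<^bsub>Aff G\<^esub> d [^]\<^bsub>Aff G\<^esub> j \<in> \<Gamma>"
  shows "\<exists>m::nat>0. \<beta> [^]\<^bsub>Aff G\<^esub> m \<otimes>\<^bsub>Aff G\<^esub> d [^]\<^bsub>Aff G\<^esub> m \<in> transl_part \<Gamma>"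
proof -
  define g where "g j = \<beta> [^]\<^bsub>Aff G\<^esub> j \<otimes>\<^bsub>Aff G\<^esub> d [^]\<^bsub>Aff G\<^esub> j" for j :: nat
  have "range (snd \<circ> g) \<subseteq> snd ` \<Gamma>"
    using mem unfolding g_def by (auto simp del: snd_Aff_mult)
  then have "\<not> inj (snd \<circ> g)"
    using finite_subset[OF _ holonomy_finite] finite_imageD by blast
  then obtain i j where "i \<noteq> j" "snd (g i) = snd (g j)"
    unfolding inj_def by auto
  then obtain i j where "i < j" and same_holonomy: "snd (g i) = snd (g j)"
    by (cases "i < j") (auto simp: neq_iff)
  define m where "m = j - i"
  define u e where "u = \<beta> [^]\<^bsub>Aff G\<^esub> i" and "e = d [^]\<^bsub>Aff G\<^esub> i"
  have u: "u \<in> carrier (Aff G)" and e: "e \<in> carrier (Aff G)"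
    using \<beta> d by (simp_all add: u_def e_def)
  have "g j = u \<otimes>\<^bsub>Aff G\<^esub> \<beta> [^]\<^bsub>Aff G\<^esub> m \<otimes>\<^bsub>Aff G\<^esub> (d [^]\<^bsub>Aff G\<^esub> m \<otimes>\<^bsub>Aff G\<^esub> e)"
    using \<open>i < j\<close> Aff.nat_pow_mult[OF \<beta>, of i m] Aff.nat_pow_mult[OF d, of m i]
    by (simp add: g_def m_def u_def e_def)
  then have "g j = u \<otimes>\<^bsub>Aff G\<^esub> g m \<otimes>\<^bsub>Aff G\<^esub> e"
    using \<beta> d u e by (simp add: g_def Aff.m_assoc)
  moreover have "g n \<in> carrier (Aff G)" for n
    using \<beta> d by (simp add: g_def)
  ultimately have "inv\<^bsub>Aff G\<^esub> u \<otimes>\<^bsub>Aff G\<^esub> g j \<otimes>\<^bsub>Aff G\<^esub> inv\<^bsub>Aff G\<^esub> e = g m"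
    using u e by (simp add: Aff.inv_solve_left' Aff.inv_solve_right' Aff.m_assoc)
  then have "snd (g m) = snd (inv\<^bsub>Aff G\<^esub> u \<otimes>\<^bsub>Aff G\<^esub> g i \<otimes>\<^bsub>Aff G\<^esub> inv\<^bsub>Aff G\<^esub> e)"
    using same_holonomy by (simp flip: \<open>_ = g m\<close>)
  also have "inv\<^bsub>Aff G\<^esub> u \<otimes>\<^bsub>Aff G\<^esub> g i \<otimes>\<^bsub>Aff G\<^esub> inv\<^bsub>Aff G\<^esub> e = \<one>\<^bsub>Aff G\<^esub>"
    using u e by (simp add: g_def u_def e_def Aff.m_assoc[symmetric])
  finally have "g m \<in> transl_part \<Gamma>"
    using mem[of m, folded g_def] by (simp add: transl_part_def id_def)
  moreover have "m > 0"
    using \<open>i < j\<close> by (simp add: m_def)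
  ultimately show ?thesis
    by (auto simp: g_def)
qed

lemma return_in_transl_part:
  assumes \<Gamma>: "subgroup \<Gamma> (Aff G)" and holonomy_finite: "finite (snd ` \<Gamma>)"
    and \<alpha>: "\<alpha> \<in> carrier (Aff G)"
    and normal: "\<forall>\<gamma>\<in>\<Gamma>. \<alpha> \<otimes>\<^bsub>Aff G\<^esub> \<gamma> \<otimes>\<^bsub>Aff G\<^esub> inv\<^bsub>Aff G\<^esub> \<alpha> \<in> \<Gamma>"
    and "k > 0" and \<gamma>\<^sub>0: "\<gamma>\<^sub>0 \<in> \<Gamma>" and return: "(aff_act G \<alpha> ^^ k) x = aff_act G \<gamma>\<^sub>0 x"
  shows "\<exists>m>0. \<exists>\<nu>\<in>transl_part \<Gamma>. (aff_act G \<alpha> ^^ m) x = aff_act G \<nu> x"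
proof -
  define \<beta> where "\<beta> = \<alpha> [^]\<^bsub>Aff G\<^esub> k"
  define d where "d = inv\<^bsub>Aff G\<^esub> \<beta> \<otimes>\<^bsub>Aff G\<^esub> \<gamma>\<^sub>0"
  have \<gamma>\<^sub>0_carrier: "\<gamma>\<^sub>0 \<in> carrier (Aff G)"
    using \<gamma>\<^sub>0 subgroup.mem_carrier[OF \<Gamma>] by blast
  have \<beta>: "\<beta> \<in> carrier (Aff G)" and d: "d \<in> carrier (Aff G)"
    using \<alpha> \<gamma>\<^sub>0_carrier by (auto simp: \<beta>_def d_def)
  have \<beta>_act: "aff_act G \<beta> = aff_act G \<alpha> ^^ k"
    using \<alpha> by (simp add: \<beta>_def aff_act_pow)
  have "\<beta> \<otimes>\<^bsub>Aff G\<^esub> d = \<gamma>\<^sub>0"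
    using \<beta> \<gamma>\<^sub>0_carrier by (simp add: d_def Aff.m_assoc[symmetric])
  then have mem: "\<beta> [^]\<^bsub>Aff G\<^esub> j \<otimes>\<^bsub>Aff G\<^esub> d [^]\<^bsub>Aff G\<^esub> j \<in> \<Gamma>" for j :: nat
    using pow_mult_pow_mem[OF \<Gamma> \<beta> d] conj_pow_closed[OF \<Gamma> \<alpha> normal] \<gamma>\<^sub>0 by (simp add: \<beta>_def)
  obtain m :: nat where "m > 0" and transl: "\<beta> [^]\<^bsub>Aff G\<^esub> m \<otimes>\<^bsub>Aff G\<^esub> d [^]\<^bsub>Aff G\<^esub> m \<in> transl_part \<Gamma>"
    using pow_mult_pow_transl_part[OF \<Gamma> holonomy_finite \<beta> d mem] by blast
  have "aff_act G d x = aff_act G (inv\<^bsub>Aff G\<^esub> \<beta>) (aff_act G \<beta> x)"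
    using \<beta> \<gamma>\<^sub>0_carrier return \<beta>_act by (simp add: d_def aff_act_mult)
  also have "\<dots> = x"
    using \<beta> by (simp add: aff_act_mult[symmetric])
  finally have "aff_act G (d [^]\<^bsub>Aff G\<^esub> (j::nat)) x = x" for j
    using d by (induction j) (simp_all add: aff_act_mult)
  then have "(aff_act G \<alpha> ^^ (k * m)) x = aff_act G (\<beta> [^]\<^bsub>Aff G\<^esub> m \<otimes>\<^bsub>Aff G\<^esub> d [^]\<^bsub>Aff G\<^esub> m) x"
    using \<beta> d by (simp add: aff_act_mult aff_act_pow \<beta>_act funpow_mult)
  moreover have "k * m > 0"
    using \<open>k > 0\<close> \<open>m > 0\<close> by simp
  ultimately show ?thesis
    using transl by blast
qed

lemma periodic_orbit_transl_part_iff: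
  assumes \<Gamma>: "subgroup \<Gamma> (Aff G)" and holonomy_finite: "finite (snd ` \<Gamma>)"
    and \<alpha>: "\<alpha> \<in> carrier (Aff G)"
    and normal: "\<forall>\<gamma>\<in>\<Gamma>. \<alpha> \<otimes>\<^bsub>Aff G\<^esub> \<gamma> \<otimes>\<^bsub>Aff G\<^esub> inv\<^bsub>Aff G\<^esub> \<alpha> \<in> \<Gamma>"
  shows "(\<exists>j>0. orbit G \<Gamma> ((aff_act G \<alpha> ^^ j) y) = orbit G \<Gamma> y)
     \<longleftrightarrow> (\<exists>j>0. orbit G (transl_part \<Gamma>) ((aff_act G \<alpha> ^^ j) y) = orbit G (transl_part \<Gamma>) y)"
proof
  assume "\<exists>j>0. orbit G \<Gamma> ((aff_act G \<alpha> ^^ j) y) = orbit G \<Gamma> y"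
  then obtain j where "j > 0" and "orbit G \<Gamma> ((aff_act G \<alpha> ^^ j) y) = orbit G \<Gamma> y"
    by blast
  then have "(aff_act G \<alpha> ^^ j) y \<in> orbit G \<Gamma> y"
    using orbit_self_mem[OF \<Gamma>, of "(aff_act G \<alpha> ^^ j) y"] by simp
  then obtain \<gamma>\<^sub>0 where "\<gamma>\<^sub>0 \<in> \<Gamma>" "(aff_act G \<alpha> ^^ j) y = aff_act G \<gamma>\<^sub>0 y"
    unfolding orbit_def by blast
  then obtain m \<nu> where "m > 0" and \<nu>: "\<nu> \<in> transl_part \<Gamma>"
    and "(aff_act G \<alpha> ^^ m) y = aff_act G \<nu> y"
    using return_in_transl_part[OF assms \<open>j > 0\<close>] by blast
  then have "orbit G (transl_part \<Gamma>) ((aff_act G \<alpha> ^^ m) y) = orbit G (transl_part \<Gamma>) y"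
    using orbit_aff_act[OF subgroup_transl_part[OF \<Gamma>] \<nu>] by simp
  then show "\<exists>j>0. orbit G (transl_part \<Gamma>) ((aff_act G \<alpha> ^^ j) y) = orbit G (transl_part \<Gamma>) y"
    using \<open>m > 0\<close> by blast
next
  note proj = proj_map_orbit[OF \<Gamma> transl_part_subset subgroup_transl_part[OF \<Gamma>]]
  assume "\<exists>j>0. orbit G (transl_part \<Gamma>) ((aff_act G \<alpha> ^^ j) y) = orbit G (transl_part \<Gamma>) y"
  then obtain j where "j > 0"
    and "orbit G (transl_part \<Gamma>) ((aff_act G \<alpha> ^^ j) y) = orbit G (transl_part \<Gamma>) y"
    by blast
  then have "orbit G \<Gamma> ((aff_act G \<alpha> ^^ j) y) = orbit G \<Gamma> y"
    using proj[of "(aff_act G \<alpha> ^^ j) y"] proj[of y] by simp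
  then show "\<exists>j>0. orbit G \<Gamma> ((aff_act G \<alpha> ^^ j) y) = orbit G \<Gamma> y"
    using \<open>j > 0\<close> by blast
qed

end

lemma funpow_semiconj:
  assumes "\<And>x. f (Orb x) = Orb (A x)"
  shows "(f ^^ j) (Orb x) = Orb ((A ^^ j) x)"
  using assms by (induction j) simp_all

lemma Per_on_range_iff:
  assumes "\<And>x. f (Orb x) = Orb (A x)"
  shows "Orb x \<in> Per_on (range Orb) f \<longleftrightarrow> (\<exists>j>0. Orb ((A ^^ j) x) = Orb x)"
  by (simp add: Per_on_def funpow_semiconj[where f = f and Orb = Orb and A = A, OF assms])

lemma ePer_on_range_iff:
  assumes "\<And>x. f (Orb x) = Orb (A x)"
  shows "Orb x \<in> ePer_on (range Orb) f \<longleftrightarrow> (\<exists>k>0. Orb ((A ^^ k) x) \<in> Per_on (range Orb) f)"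
  by (simp add: ePer_on_def funpow_semiconj[where f = f and Orb = Orb and A = A, OF assms])

lemma preimage_Per_on_ePer_on_eq:
  assumes f: "\<And>x. f (Orb x) = Orb (A x)" and g: "\<And>x. g (Orb' x) = Orb' (A x)"
    and p: "\<And>x. p (Orb' x) = Orb x"
    and same_periodic: "\<And>y. (\<exists>j>0. Orb ((A ^^ j) y) = Orb y) \<longleftrightarrow> (\<exists>j>0. Orb' ((A ^^ j) y) = Orb' y)"
  shows "{S \<in> range Orb'. p S \<in> Per_on (range Orb) f} = Per_on (range Orb') g"
    and "{S \<in> range Orb'. p S \<in> ePer_on (range Orb) f} = ePer_on (range Orb') g"
proof -
  have Per_iff: "Orb' x \<in> Per_on (range Orb') g \<longleftrightarrow> Orb x \<in> Per_on (range Orb) f" for x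
    using Per_on_range_iff[where f = f and Orb = Orb and A = A, OF f]
      Per_on_range_iff[where f = g and Orb = Orb' and A = A, OF g] same_periodic
    by simp
  then have ePer_iff: "Orb' x \<in> ePer_on (range Orb') g \<longleftrightarrow> Orb x \<in> ePer_on (range Orb) f" for x
    using ePer_on_range_iff[where f = f and Orb = Orb and A = A, OF f]
      ePer_on_range_iff[where f = g and Orb = Orb' and A = A, OF g] by simp
  have "Per_on (range Orb') g \<subseteq> range Orb'" "ePer_on (range Orb') g \<subseteq> range Orb'"
    by (auto simp: Per_on_def ePer_on_def)
  then show "{S \<in> range Orb'. p S \<in> Per_on (range Orb) f} = Per_on (range Orb') g"
    and "{S \<in> range Orb'. p S \<in> ePer_on (range Orb) f} = ePer_on (range Orb') g"
    using Per_iff ePer_iff p by auto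
qed

theorem mainTheorem8:
  fixes G :: "('a::euclidean_space) monoid"
    and \<Gamma> :: "('a \<times> ('a \<Rightarrow> 'a)) set"
    and F :: "('a \<Rightarrow> 'a) set"
    and \<alpha> :: "'a \<times> ('a \<Rightarrow> 'a)"
  assumes G_group: "group G"
    and G_carrier: "carrier G = UNIV"
    and G_mult_cont: "continuous_on UNIV (\<lambda>(x, y). x \<otimes>\<^bsub>G\<^esub> y)"
    and G_inv_cont: "continuous_on UNIV (\<lambda>x. inv\<^bsub>G\<^esub> x)"
    and G_nilpotent: "nilpotent_group G"
    and F_fin: "finite F"
    and F_aut: "F \<subseteq> cont_aut G"
    and \<Gamma>_sub: "subgroup \<Gamma> (Aff G)"
    and \<Gamma>_in: "\<Gamma> \<subseteq> UNIV \<times> F"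
    and \<Gamma>_discrete: "\<forall>\<delta>\<in>F. discrete {g. (g, \<delta>) \<in> \<Gamma>}"
    and \<Gamma>_torsion_free: "\<forall>\<gamma>\<in>\<Gamma>. \<forall>n::nat. n > 0 \<longrightarrow> \<gamma> [^]\<^bsub>Aff G\<^esub> n = \<one>\<^bsub>Aff G\<^esub> \<longrightarrow> \<gamma> = \<one>\<^bsub>Aff G\<^esub>"
    and \<Gamma>_cocompact: "\<exists>K. compact K \<and> (\<forall>x. \<exists>\<gamma>\<in>\<Gamma>. \<exists>k\<in>K. x = aff_act G \<gamma> k)"
    and \<alpha>_aff: "\<alpha> \<in> carrier (Aff G)"
    and \<alpha>_conj: "\<forall>\<gamma>\<in>\<Gamma>. \<alpha> \<otimes>\<^bsub>Aff G\<^esub> \<gamma> \<otimes>\<^bsub>Aff G\<^esub> inv\<^bsub>Aff G\<^esub> \<alpha> \<in> \<Gamma>"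
  shows "(\<forall>n\<in>transl_part \<Gamma>. \<alpha> \<otimes>\<^bsub>Aff G\<^esub> n \<otimes>\<^bsub>Aff G\<^esub> inv\<^bsub>Aff G\<^esub> \<alpha> \<in> transl_part \<Gamma>)
       \<and> (\<forall>x. induced_map G \<Gamma> \<alpha> (orbit G \<Gamma> x) = orbit G \<Gamma> (aff_act G \<alpha> x))
       \<and> (\<forall>x. induced_map G (transl_part \<Gamma>) \<alpha> (orbit G (transl_part \<Gamma>) x)
              = orbit G (transl_part \<Gamma>) (aff_act G \<alpha> x))
       \<and> (\<forall>x. proj_map G \<Gamma> (orbit G (transl_part \<Gamma>) x) = orbit G \<Gamma> x)
       \<and> (\<forall>S\<in>orbit_space G (transl_part \<Gamma>).
              proj_map G \<Gamma> (induced_map G (transl_part \<Gamma>) \<alpha> S)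
              = induced_map G \<Gamma> \<alpha> (proj_map G \<Gamma> S))
       \<and> {S \<in> orbit_space G (transl_part \<Gamma>).
            proj_map G \<Gamma> S \<in> ePer_on (orbit_space G \<Gamma>) (induced_map G \<Gamma> \<alpha>)}
         = ePer_on (orbit_space G (transl_part \<Gamma>)) (induced_map G (transl_part \<Gamma>) \<alpha>)
       \<and> {S \<in> orbit_space G (transl_part \<Gamma>).
            proj_map G \<Gamma> S \<in> Per_on (orbit_space G \<Gamma>) (induced_map G \<Gamma> \<alpha>)}
         = Per_on (orbit_space G (transl_part \<Gamma>)) (induced_map G (transl_part \<Gamma>) \<alpha>)"
proof -
  interpret aff_group G
    using G_group G_carrier by (simp add: aff_group_def aff_group_axioms_def)
  have "snd ` \<Gamma> \<subseteq> F"
    using \<Gamma>_in by auto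
  then have holonomy_finite: "finite (snd ` \<Gamma>)"
    using F_fin by (rule finite_subset)
  have N_sub: "subgroup (transl_part \<Gamma>) (Aff G)"
    using subgroup_transl_part[OF \<Gamma>_sub] .
  have N_normal: "\<forall>\<nu>\<in>transl_part \<Gamma>. \<alpha> \<otimes>\<^bsub>Aff G\<^esub> \<nu> \<otimes>\<^bsub>Aff G\<^esub> inv\<^bsub>Aff G\<^esub> \<alpha> \<in> transl_part \<Gamma>"
    using transl_part_conj_closed[OF \<alpha>_aff \<alpha>_conj] .
  note lift_\<Gamma> = induced_map_orbit[OF \<Gamma>_sub \<alpha>_aff \<alpha>_conj]
  note lift_N = induced_map_orbit[OF N_sub \<alpha>_aff N_normal]
  note proj = proj_map_orbit[OF \<Gamma>_sub transl_part_subset N_sub]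
  note preimages = preimage_Per_on_ePer_on_eq[OF lift_\<Gamma> lift_N proj
      periodic_orbit_transl_part_iff[OF \<Gamma>_sub holonomy_finite \<alpha>_aff \<alpha>_conj]]
  have "\<forall>S\<in>range (orbit G (transl_part \<Gamma>)).
      proj_map G \<Gamma> (induced_map G (transl_part \<Gamma>) \<alpha> S) = induced_map G \<Gamma> \<alpha> (proj_map G \<Gamma> S)"
    by (simp add: lift_\<Gamma> lift_N proj)
  then show ?thesis
    unfolding orbit_space_def using N_normal preimages by (simp add: lift_\<Gamma> lift_N proj)
qed

end
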